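(* Let $\mathcal L_t(\varphi)=\sum_{j=1}^r\lambda_j\int_{\Gamma_j}\varphi(x)e^{x^3/3+tx}\,dx$, where each $\Gamma_j$ is a path coming from infinity in one of the directions $\arg x\in\{\pi,\pi/3,-\pi/3\}$ and going to infinity in another of these directions, and the $\lambda_j\in\mathbb C$ do not depend on $t$. Assume that for $t$ in an open interval $I$ all Hankel determinants of the moments $\mathcal L_t(x^k)$ are nonzero, and let $a_n(t),b_n(t)$ be the recurrence coefficients of the corresponding orthonormal polynomials. Then for $n\ge1$ (with $a_0=0$ where it occurs) $$a_n^2+a_{n+1}^2+b_n^2+t=0,\qquad n+a_n^2(b_n+b_{n-1})=0,$$ and $$\frac{\dot a_n}{a_n}=b_n+\frac{n}{2a_n^2},\qquad \dot b_n=-b_n^2-2a_n^2-t.$$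
   Context: Orthonormal polynomials $p_n(z)=\gamma_nz^n+\cdots$ with $\mathcal L_t(p_np_m)=\delta_{n,m}$ satisfy $a_{n+1}p_{n+1}(z)=(z-b_n)p_n(z)-a_np_{n-1}(z)$, $p_{-1}=0$, $a_n=\gamma_{n-1}/\gamma_n$ (quantities possibly complex). Dots denote $d/dt$. *)

theory Defs
  imports "HOL-Analysis.Analysis" "HOL-Computational_Algebra.Polynomial"
begin

definition dirs :: "complex set" where
  "dirs = {cis pi, cis (pi/3), cis (-(pi/3))}"

definition ray_integral :: "complex poly \<Rightarrow> complex \<Rightarrow> real \<Rightarrow> complex" where
  "ray_integral \<phi> w t =
     integral {0..} (\<lambda>s::real. w * poly \<phi> (of_real s * w)
                       * exp ((of_real s * w) ^ 3 / 3 + of_real t * (of_real s * w)))"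

text \<open>Integral along a contour coming from infinity in direction u and going to infinity
  in direction v (realised as the canonical contour: in along the u-ray, out along the v-ray;
  by Cauchy's theorem every such contour gives the same value).\<close>
definition contour_functional :: "complex \<Rightarrow> complex \<Rightarrow> real \<Rightarrow> complex poly \<Rightarrow> complex" where
  "contour_functional u v t \<phi> = ray_integral \<phi> v t - ray_integral \<phi> u t"

definition L_fun :: "nat \<Rightarrow> (nat \<Rightarrow> complex) \<Rightarrow> (nat \<Rightarrow> complex) \<Rightarrow> (nat \<Rightarrow> complex)
                     \<Rightarrow> real \<Rightarrow> complex poly \<Rightarrow> complex" where
  "L_fun r lam src tgt t \<phi> = (\<Sum>j<r. lam j * contour_functional (src j) (tgt j) t \<phi>)"

definition hankel_det :: "(nat \<Rightarrow> complex) \<Rightarrow> nat \<Rightarrow> complex" where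
  "hankel_det m n = (\<Sum>p\<in>{p. p permutes {..<n}}. of_int (sign p) * (\<Prod>i<n. m (i + p i)))"

end

theory Submission
  imports Defs
begin

text \<open>
  Along each admissible direction \<open>w\<close> one has \<open>w^3 = -1\<close>, so the weight \<open>exp(x^3/3 + t x)\<close>
  decays like \<open>exp(-s^3/3)\<close> on the ray \<open>x = s w\<close>, locally uniformly in \<open>t\<close>. Hence \<open>L_t\<close>
  annihilates \<open>phi' + (x^2 + t) phi\<close> (integration by parts) and \<open>d/dt L_t(phi) = L_t(x phi)\<close>
  (differentiation under the integral sign).

  Integrating by parts against \<open>p_n^2\<close> and \<open>p_n p_(n-1)\<close> and expanding \<open>x p_n\<close> by the
  recurrence gives the two string equations. For the monic \<open>P_n = p_n / gamma_n\<close> and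
  \<open>h_n = L_t(P_n^2) = gamma_n^-2\<close>, the derivative rule and orthogonality give \<open>h_n' = b_n h_n\<close>,
  so \<open>(a_n^2)' = (h_n / h_(n-1))' = a_n^2 (b_n - b_(n-1))\<close>; with the second string equation this is
  the formula for \<open>a_n'\<close>. Differentiating \<open>L_t(P_(n+1) P_n) = 0\<close> shows that the coefficient of
  \<open>x^n\<close> in \<open>P_(n+1)\<close> has derivative \<open>-a_(n+1)^2\<close>. Since \<open>b_n\<close> is the difference of the
  subleading coefficients of \<open>P_n\<close> and \<open>P_(n+1)\<close>, \<open>b_n' = a_(n+1)^2 - a_n^2\<close>, which the first
  string equation turns into \<open>-b_n^2 - 2 a_n^2 - t\<close>.
\<close>

section \<open>Decay of the cubic weight along the admissible rays\<close>

definition cubic_weight :: "real \<Rightarrow> complex \<Rightarrow> complex" where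
  "cubic_weight t z = exp (z ^ 3 / 3 + of_real t * z)"

lemma power_le_fact_mult_exp:
  fixes s :: real
  assumes "s \<ge> 0"
  shows "s ^ i \<le> fact i * exp s"
proof -
  have "(\<Sum>n\<in>{i}. inverse (fact n) * s ^ n) \<le> (\<Sum>n. inverse (fact n) * s ^ n)"
    using assms by (intro sum_le_suminf) (auto intro: summable_exp)
  also have "\<dots> = exp s"
    by (simp add: exp_def scaleR_conv_of_real field_simps)
  finally show ?thesis
    by (simp add: field_simps)
qed

lemma linear_minus_cube_le:
  fixes K s :: real
  assumes K: "K \<ge> 1" and s: "s \<ge> 0"
  shows "K * s - s ^ 3 / 3 \<le> 3 * K\<^sup>2"
proof (cases "s \<le> 3 * K")
  case True
  then have "K * s \<le> K * (3 * K)"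
    using K by (intro mult_left_mono) auto
  moreover have "0 \<le> s ^ 3"
    using s by simp
  ultimately show ?thesis
    unfolding power2_eq_square by linarith
next
  case False
  have "1 \<le> s"
    using False K by simp
  then have "s * 1 \<le> s * s"
    using s by (rule mult_left_mono)
  then have "3 * K \<le> s * s"
    using False by simp
  then have "3 * K * s \<le> s * s * s"
    using s by (rule mult_right_mono)
  then show ?thesis
    unfolding power3_eq_cube using zero_le_power2[of K] by linarith
qed

lemma exp_linear_minus_cube_le:
  fixes A :: real
  shows "\<exists>M. \<forall>s\<ge>0. exp (A * s - s ^ 3 / 3) \<le> M * exp (- s)"
proof (intro exI allI impI)
  fix s :: real
  assume s: "s \<ge> 0"
  define K where "K = \<bar>A\<bar> + 1"
  have "A * s + s \<le> K * s"
    using s by (simp add: K_def distrib_right mult_right_mono)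
  then have "A * s + s - s ^ 3 / 3 \<le> 3 * K\<^sup>2"
    using linear_minus_cube_le[of K s] s by (simp add: K_def)
  then have "exp (A * s - s ^ 3 / 3) \<le> exp (3 * K\<^sup>2 + - s)"
    by simp
  then show "exp (A * s - s ^ 3 / 3) \<le> exp (3 * K\<^sup>2) * exp (- s)"
    by (simp only: exp_add)
qed

lemma norm_poly_le_mult_exp:
  fixes \<phi> :: "complex poly"
  shows "\<exists>K\<ge>0. \<forall>s\<ge>0. \<forall>w. norm w = 1 \<longrightarrow> norm (poly \<phi> (of_real s * w)) \<le> K * exp s"
proof (intro exI[of _ "\<Sum>i\<le>degree \<phi>. norm (coeff \<phi> i) * fact i"] conjI allI impI)
  show "0 \<le> (\<Sum>i\<le>degree \<phi>. norm (coeff \<phi> i) * fact i)"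
    by (intro sum_nonneg) auto
  fix s :: real and w :: complex
  assume s: "s \<ge> 0" and w: "norm w = 1"
  have "norm (poly \<phi> (of_real s * w)) \<le> (\<Sum>i\<le>degree \<phi>. norm (coeff \<phi> i * (of_real s * w) ^ i))"
    unfolding poly_altdef by (rule norm_sum)
  also have "\<dots> = (\<Sum>i\<le>degree \<phi>. norm (coeff \<phi> i) * s ^ i)"
    using s w by (simp add: norm_mult norm_power)
  also have "\<dots> \<le> (\<Sum>i\<le>degree \<phi>. norm (coeff \<phi> i) * (fact i * exp s))"
    using s power_le_fact_mult_exp by (intro sum_mono mult_left_mono) auto
  finally show "norm (poly \<phi> (of_real s * w)) \<le> (\<Sum>i\<le>degree \<phi>. norm (coeff \<phi> i) * fact i) * exp s"
    by (simp add: sum_distrib_right mult.assoc)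
qed

lemma norm_poly_mult_exp_cube_le:
  fixes \<phi> :: "complex poly"
  shows "\<exists>C. \<forall>s\<ge>0. \<forall>w. norm w = 1 \<longrightarrow>
           norm (poly \<phi> (of_real s * w)) * exp (A * s - s ^ 3 / 3) \<le> C * exp (- s)"
proof -
  obtain K where K: "K \<ge> 0"
    "\<And>s w. s \<ge> 0 \<Longrightarrow> norm w = 1 \<Longrightarrow> norm (poly \<phi> (of_real s * w)) \<le> K * exp s"
    using norm_poly_le_mult_exp[of \<phi>] by blast
  obtain M where M: "\<And>s. s \<ge> 0 \<Longrightarrow> exp ((A + 1) * s - s ^ 3 / 3) \<le> M * exp (- s)"
    using exp_linear_minus_cube_le[of "A + 1"] by blast
  show ?thesis
  proof (intro exI[of _ "K * M"] allI impI)
    fix s :: real and w :: complex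
    assume s: "s \<ge> 0" and w: "norm w = 1"
    have "norm (poly \<phi> (of_real s * w)) * exp (A * s - s ^ 3 / 3) \<le> K * exp s * exp (A * s - s ^ 3 / 3)"
      using K(2)[OF s w] by (intro mult_right_mono) auto
    also have "\<dots> = K * exp ((A + 1) * s - s ^ 3 / 3)"
      by (simp add: mult.assoc exp_add[symmetric] algebra_simps)
    also have "\<dots> \<le> K * (M * exp (- s))"
      using M[OF s] K(1) by (intro mult_left_mono) auto
    finally show "norm (poly \<phi> (of_real s * w)) * exp (A * s - s ^ 3 / 3) \<le> K * M * exp (- s)"
      by (simp add: mult.assoc)
  qed
qed

lemma norm_dirs: "w \<in> dirs \<Longrightarrow> norm w = 1"
  by (auto simp: dirs_def)

lemma cube_dirs:
  assumes "w \<in> dirs"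
  shows "w ^ 3 = -1"
proof -
  have "cis (pi / 3) ^ 3 = -1"
    using Complex.DeMoivre[of "pi / 3" 3] by simp
  moreover have "cis (- (pi / 3)) ^ 3 = -1"
    using Complex.DeMoivre[of "- (pi / 3)" 3] by (simp add: complex_eq_iff)
  ultimately show ?thesis
    using assms by (auto simp: dirs_def)
qed

lemma norm_cubic_weight_on_ray_le:
  assumes w: "w \<in> dirs" and s: "s \<ge> 0"
  shows "norm (cubic_weight t (of_real s * w)) \<le> exp (\<bar>t\<bar> * s - s ^ 3 / 3)"
proof -
  have cube: "(of_real s * w) ^ 3 / 3 = of_real (- (s ^ 3) / 3)"
    by (simp add: power_mult_distrib cube_dirs[OF w])
  have "t * s * Re w \<le> \<bar>t\<bar> * s * \<bar>Re w\<bar>"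
    using s by (metis abs_ge_self abs_mult abs_of_nonneg)
  also have "\<dots> \<le> \<bar>t\<bar> * s"
    using abs_Re_le_cmod[of w] norm_dirs[OF w] s by (simp add: mult_left_le)
  finally show ?thesis
    by (simp add: cubic_weight_def norm_exp_eq_Re cube)
qed

lemma norm_poly_mult_cubic_weight_le:
  fixes \<phi> :: "complex poly"
  shows "\<exists>C. \<forall>w\<in>dirs. \<forall>t s. \<bar>t\<bar> \<le> A \<longrightarrow> s \<ge> 0 \<longrightarrow>
           norm (poly \<phi> (of_real s * w) * cubic_weight t (of_real s * w)) \<le> C * exp (- s)"
proof -
  obtain C where C: "\<And>s w. s \<ge> 0 \<Longrightarrow> norm w = 1 \<Longrightarrow>
      norm (poly \<phi> (of_real s * w)) * exp (A * s - s ^ 3 / 3) \<le> C * exp (- s)"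
    using norm_poly_mult_exp_cube_le[of \<phi> A] by blast
  show ?thesis
  proof (intro exI[of _ C] ballI allI impI)
    fix w t s
    assume w: "w \<in> dirs" and t: "\<bar>t\<bar> \<le> A" and s: "(s::real) \<ge> 0"
    have "norm (poly \<phi> (of_real s * w) * cubic_weight t (of_real s * w))
        \<le> norm (poly \<phi> (of_real s * w)) * exp (\<bar>t\<bar> * s - s ^ 3 / 3)"
      unfolding norm_mult by (intro mult_left_mono norm_cubic_weight_on_ray_le w s) auto
    also have "\<dots> \<le> norm (poly \<phi> (of_real s * w)) * exp (A * s - s ^ 3 / 3)"
      using t s by (intro mult_left_mono) (auto intro!: mult_right_mono)
    also have "\<dots> \<le> C * exp (- s)"
      using C[OF s norm_dirs[OF w]] .
    finally show "norm (poly \<phi> (of_real s * w) * cubic_weight t (of_real s * w)) \<le> C * exp (- s)" .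
  qed
qed

section \<open>Integrals of exponentially decaying functions\<close>

lemma has_integral_mult_exp_minus:
  fixes C c :: real
  shows "((\<lambda>s. C * exp (- s)) has_integral C * exp (- c)) {c..}"
  using has_integral_mult_right[OF has_integral_exp_minus_to_infinity[of 1 c], of C] by simp

lemma exp_decay_integrable_on:
  fixes f :: "real \<Rightarrow> 'a::euclidean_space"
  assumes "continuous_on {c..} f" and "\<And>s. s \<ge> c \<Longrightarrow> norm (f s) \<le> C * exp (- s)"
  shows "f integrable_on {c..}"
proof (rule measurable_bounded_by_integrable_imp_integrable)
  show "f \<in> borel_measurable (lebesgue_on {c..})"
    using assms(1) by (rule continuous_imp_measurable_on_sets_lebesgue) simp
  show "(\<lambda>s. C * exp (- s)) integrable_on {c..}"
    using has_integral_mult_exp_minus by blast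
qed (use assms(2) in auto)

lemma norm_integral_exp_decay_le:
  fixes f :: "real \<Rightarrow> 'a::euclidean_space"
  assumes "continuous_on {c..} f" and "\<And>s. s \<ge> c \<Longrightarrow> norm (f s) \<le> C * exp (- s)"
  shows "norm (integral {c..} f) \<le> C * exp (- c)"
proof -
  note exp = has_integral_mult_exp_minus[of C c]
  have "norm (integral {c..} f) \<le> integral {c..} (\<lambda>s. C * exp (- s))"
    using exp assms(2) by (intro integral_norm_bound_integral exp_decay_integrable_on[OF assms(1)]) auto
  also have "\<dots> = C * exp (- c)"
    using exp by (rule integral_unique)
  finally show ?thesis .
qed

lemma exp_decay_tendsto_zero:
  fixes f :: "real \<Rightarrow> 'a::real_normed_vector"
  assumes "\<And>s. s \<ge> c \<Longrightarrow> norm (f s) \<le> C * exp (- s)"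
  shows "(f \<longlongrightarrow> 0) at_top"
proof (rule Lim_null_comparison)
  show "\<forall>\<^sub>F s in at_top. norm (f s) \<le> C * exp (- s)"
    using eventually_ge_at_top[of c] by eventually_elim (use assms in auto)
  have "((\<lambda>s::real. exp (- s)) \<longlongrightarrow> 0) at_top"
    using filterlim_compose[OF exp_at_bot filterlim_uminus_at_bot_at_top] by (simp add: o_def)
  then show "((\<lambda>s. C * exp (- s)) \<longlongrightarrow> 0) at_top"
    by (rule tendsto_mult_right_zero)
qed

lemma integral_atLeastAtMost_tendsto_exp_decay:
  fixes f :: "real \<Rightarrow> 'a::euclidean_space"
  assumes cont: "continuous_on {c..} f" and decay: "\<And>s. s \<ge> c \<Longrightarrow> norm (f s) \<le> C * exp (- s)"
  shows "((\<lambda>R. integral {c..R} f) \<longlongrightarrow> integral {c..} f) at_top"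
proof -
  have split: "integral {c..} f = integral {c..R} f + integral {R..} f" if R: "R \<ge> c" for R
  proof -
    have "f integrable_on {c..R}"
      using integrable_on_subinterval[OF exp_decay_integrable_on[OF cont decay]] by auto
    moreover have "f integrable_on {R..}"
      using R decay by (intro exp_decay_integrable_on[where C=C] continuous_on_subset[OF cont]) auto
    ultimately
    have "(f has_integral (integral {c..R} f + integral {R..} f)) ({c..R} \<union> {R..})"
      using R by (intro has_integral_Un[OF integrable_integral integrable_integral]) (auto simp: negligible_sing)
    moreover have "{c..R} \<union> {R..} = {c..}"
      using R by auto
    ultimately show ?thesis
      by (simp add: integral_unique)
  qed
  have "((\<lambda>R. integral {R..} f) \<longlongrightarrow> 0) at_top"
  proof (rule exp_decay_tendsto_zero)
    fix R assume "R \<ge> c"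
    then show "norm (integral {R..} f) \<le> C * exp (- R)"
      using assms by (intro norm_integral_exp_decay_le continuous_on_subset[OF cont]) auto
  qed
  then have "((\<lambda>R. integral {c..} f - integral {R..} f) \<longlongrightarrow> integral {c..} f) at_top"
    by (auto intro: tendsto_eq_intros)
  moreover have "\<forall>\<^sub>F R in at_top. integral {c..} f - integral {R..} f = integral {c..R} f"
    using eventually_ge_at_top[of c] by eventually_elim (simp add: split)
  ultimately show ?thesis
    by (rule Lim_transform_eventually)
qed

section \<open>Integrals along a ray\<close>

definition ray_integrand :: "complex poly \<Rightarrow> complex \<Rightarrow> real \<Rightarrow> real \<Rightarrow> complex" where
  "ray_integrand \<phi> w t s = w * poly \<phi> (of_real s * w) * cubic_weight t (of_real s * w)"

lemma ray_integral_eq_integral: "ray_integral \<phi> w t = integral {0..} (ray_integrand \<phi> w t)"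
  unfolding ray_integral_def ray_integrand_def[abs_def] cubic_weight_def by simp

lemma continuous_on_ray_integrand: "continuous_on S (ray_integrand \<phi> w t)"
  unfolding ray_integrand_def cubic_weight_def by (intro continuous_intros) auto

lemma norm_ray_integrand_le:
  fixes \<phi> :: "complex poly"
  shows "\<exists>C. \<forall>w\<in>dirs. \<forall>t s. \<bar>t\<bar> \<le> A \<longrightarrow> s \<ge> 0 \<longrightarrow> norm (ray_integrand \<phi> w t s) \<le> C * exp (- s)"
  using norm_poly_mult_cubic_weight_le[where \<phi> = \<phi> and A = A]
  by (simp add: ray_integrand_def norm_mult norm_dirs mult.assoc)

lemma ray_integrand_integrable:
  assumes "w \<in> dirs"
  shows "ray_integrand \<phi> w t integrable_on {0..}"
proof -
  obtain C where "\<forall>w\<in>dirs. \<forall>t' s. \<bar>t'\<bar> \<le> \<bar>t\<bar> \<longrightarrow> s \<ge> 0 \<longrightarrow> norm (ray_integrand \<phi> w t' s) \<le> C * exp (- s)"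
    using norm_ray_integrand_le[where \<phi> = \<phi> and A = "\<bar>t\<bar>"] by blast
  then show ?thesis
    using assms by (intro exp_decay_integrable_on[where C = C] continuous_on_ray_integrand) auto
qed

lemma ray_integral_add:
  assumes "w \<in> dirs"
  shows "ray_integral (\<phi> + \<psi>) w t = ray_integral \<phi> w t + ray_integral \<psi> w t"
proof -
  have "ray_integrand (\<phi> + \<psi>) w t = (\<lambda>s. ray_integrand \<phi> w t s + ray_integrand \<psi> w t s)"
    by (simp add: ray_integrand_def algebra_simps fun_eq_iff)
  then show ?thesis
    using assms by (simp add: ray_integral_eq_integral integral_add ray_integrand_integrable)
qed

lemma ray_integral_smult: "ray_integral (smult c \<phi>) w t = c * ray_integral \<phi> w t"
proof -
  have "ray_integrand (smult c \<phi>) w t = (\<lambda>s. c * ray_integrand \<phi> w t s)"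
    by (simp add: ray_integrand_def algebra_simps fun_eq_iff)
  then show ?thesis
    by (simp add: ray_integral_eq_integral)
qed

lemma poly_mult_cubic_weight_on_ray_has_vector_derivative:
  "((\<lambda>s. poly \<phi> (of_real s * w) * cubic_weight t (of_real s * w)) has_vector_derivative
     ray_integrand (pderiv \<phi> + [:of_real t, 0, 1:] * \<phi>) w t s) (at s)"
proof -
  have "((\<lambda>s. of_real s * w) has_vector_derivative w) (at s)"
    using has_vector_derivative_mult_left[OF has_vector_derivative_of_real[OF DERIV_ident], of w]
    by simp
  moreover have "((\<lambda>z. poly \<phi> z * cubic_weight t z) has_field_derivative
      poly (pderiv \<phi> + [:of_real t, 0, 1:] * \<phi>) z * cubic_weight t z) (at z)" for z
    unfolding cubic_weight_def
    by (auto intro!: derivative_eq_intros simp: algebra_simps power2_eq_square)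
  ultimately show ?thesis
    using field_vector_diff_chain_at unfolding ray_integrand_def o_def
    by (fastforce simp: algebra_simps)
qed

lemma ray_integral_by_parts:
  assumes w: "w \<in> dirs"
  shows "ray_integral (pderiv \<phi> + [:of_real t, 0, 1:] * \<phi>) w t = - poly \<phi> 0"
proof -
  define \<psi> where "\<psi> = pderiv \<phi> + [:of_real t, 0, 1:] * \<phi>"
  define G where "G s = poly \<phi> (of_real s * w) * cubic_weight t (of_real s * w)" for s :: real
  have G_deriv: "(G has_vector_derivative ray_integrand \<psi> w t s) (at s)" for s
    unfolding G_def \<psi>_def by (rule poly_mult_cubic_weight_on_ray_has_vector_derivative)
  obtain C where C: "\<forall>w\<in>dirs. \<forall>t' s. \<bar>t'\<bar> \<le> \<bar>t\<bar> \<longrightarrow> s \<ge> 0 \<longrightarrow>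
      norm (ray_integrand \<psi> w t' s) \<le> C * exp (- s)"
    using norm_ray_integrand_le[where \<phi> = \<psi> and A = "\<bar>t\<bar>"] by blast
  obtain C' where C': "\<forall>w\<in>dirs. \<forall>t' s. \<bar>t'\<bar> \<le> \<bar>t\<bar> \<longrightarrow> s \<ge> 0 \<longrightarrow>
      norm (poly \<phi> (of_real s * w) * cubic_weight t' (of_real s * w)) \<le> C' * exp (- s)"
    using norm_poly_mult_cubic_weight_le[where \<phi> = \<phi> and A = "\<bar>t\<bar>"] by blast
  have "((\<lambda>R. integral {0..R} (ray_integrand \<psi> w t)) \<longlongrightarrow> ray_integral \<psi> w t) at_top"
    unfolding ray_integral_eq_integral
    using C w by (intro integral_atLeastAtMost_tendsto_exp_decay continuous_on_ray_integrand) auto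
  moreover have "((\<lambda>R. integral {0..R} (ray_integrand \<psi> w t)) \<longlongrightarrow> - G 0) at_top"
  proof -
    have "(G \<longlongrightarrow> 0) at_top"
      using C' w by (intro exp_decay_tendsto_zero[where c = 0 and C = C']) (auto simp: G_def)
    then have "((\<lambda>R. G R - G 0) \<longlongrightarrow> - G 0) at_top"
      by (auto intro: tendsto_eq_intros)
    moreover have "\<forall>\<^sub>F R in at_top. G R - G 0 = integral {0..R} (ray_integrand \<psi> w t)"
      using eventually_ge_at_top[of "0::real"]
    proof eventually_elim
      case (elim R)
      then show ?case
        using fundamental_theorem_of_calculus[OF elim, of G] G_deriv
        by (auto intro: has_vector_derivative_at_within integral_unique[symmetric])
    qed
    ultimately show ?thesis
      by (rule Lim_transform_eventually)
  qed
  ultimately have "ray_integral \<psi> w t = - G 0"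
    by (rule tendsto_unique[rotated 1]) simp
  then show ?thesis
    by (simp add: \<psi>_def G_def cubic_weight_def)
qed

lemma norm_exp_minus_one_minus_le: "norm (exp z - 1 - z) \<le> exp (norm z) * (norm z)\<^sup>2"
  for z :: complex
  using Taylor_exp_field[of z 1] by (simp add: numeral_2_eq_2 power_Suc diff_diff_eq)

lemma norm_exp_remainder_on_ray_le:
  fixes h s :: real and w :: complex
  assumes h: "\<bar>h\<bar> \<le> 1" and s: "s \<ge> 0" and w: "norm w = 1"
  defines "z \<equiv> of_real h * (of_real s * w)"
  shows "norm (exp z - 1 - z) \<le> 2 * h\<^sup>2 * (exp s * exp s)"
proof -
  have "norm (exp z - 1 - z) \<le> exp (\<bar>h\<bar> * s) * (\<bar>h\<bar> * s)\<^sup>2"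
    using norm_exp_minus_one_minus_le[of z] s w by (simp add: z_def norm_mult)
  also have "\<dots> \<le> exp s * (h\<^sup>2 * s\<^sup>2)"
    using h s by (intro mult_mono) (auto simp: power_mult_distrib mult_left_le_one_le)
  also have "\<dots> \<le> exp s * (h\<^sup>2 * (2 * exp s))"
    using power_le_fact_mult_exp[OF s, of 2] by (intro mult_left_mono) (auto simp: numeral_2_eq_2)
  finally show ?thesis
    by (simp add: algebra_simps)
qed

lemma norm_ray_integrand_remainder_le:
  assumes w: "w \<in> dirs"
  shows "\<exists>C. \<forall>h s. \<bar>h\<bar> \<le> 1 \<longrightarrow> s \<ge> 0 \<longrightarrow>
           norm (ray_integrand \<phi> w (t + h) s - ray_integrand \<phi> w t s
                 - of_real h * ray_integrand ([:0, 1:] * \<phi>) w t s) \<le> h\<^sup>2 * C * exp (- s)"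
proof -
  obtain C where C: "\<And>s w. s \<ge> 0 \<Longrightarrow> norm w = 1 \<Longrightarrow>
      norm (poly \<phi> (of_real s * w)) * exp ((\<bar>t\<bar> + 2) * s - s ^ 3 / 3) \<le> C * exp (- s)"
    using norm_poly_mult_exp_cube_le[of \<phi> "\<bar>t\<bar> + 2"] by blast
  show ?thesis
  proof (intro exI[of _ "2 * C"] allI impI)
    fix h s :: real
    assume h: "\<bar>h\<bar> \<le> 1" and s: "s \<ge> 0"
    define z where "z = of_real h * (of_real s * w)"
    have "cubic_weight (t + h) (of_real s * w) = cubic_weight t (of_real s * w) * exp z"
      by (simp add: cubic_weight_def z_def exp_add[symmetric] algebra_simps)
    then have eq: "ray_integrand \<phi> w (t + h) s - ray_integrand \<phi> w t s
        - of_real h * ray_integrand ([:0, 1:] * \<phi>) w t s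
        = w * poly \<phi> (of_real s * w) * cubic_weight t (of_real s * w) * (exp z - 1 - z)"
      by (simp add: ray_integrand_def z_def algebra_simps)
    have rem: "norm (exp z - 1 - z) \<le> 2 * h\<^sup>2 * (exp s * exp s)"
      unfolding z_def by (rule norm_exp_remainder_on_ray_le[OF h s norm_dirs[OF w]])
    have "norm (w * poly \<phi> (of_real s * w) * cubic_weight t (of_real s * w) * (exp z - 1 - z))
        \<le> norm (poly \<phi> (of_real s * w)) * exp (\<bar>t\<bar> * s - s ^ 3 / 3) * (2 * h\<^sup>2 * (exp s * exp s))"
      unfolding norm_mult norm_dirs[OF w]
      by (intro mult_mono mult_left_mono norm_cubic_weight_on_ray_le w s rem) auto
    also have "\<dots> = 2 * h\<^sup>2 * (norm (poly \<phi> (of_real s * w)) * exp ((\<bar>t\<bar> + 2) * s - s ^ 3 / 3))"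
      by (simp add: exp_add[symmetric] algebra_simps)
    also have "\<dots> \<le> 2 * h\<^sup>2 * (C * exp (- s))"
      using C[OF s norm_dirs[OF w]] by (intro mult_left_mono) auto
    finally show "norm (ray_integrand \<phi> w (t + h) s - ray_integrand \<phi> w t s
        - of_real h * ray_integrand ([:0, 1:] * \<phi>) w t s) \<le> h\<^sup>2 * (2 * C) * exp (- s)"
      unfolding eq by (simp add: algebra_simps)
  qed
qed

lemma norm_ray_integral_remainder_le:
  assumes w: "w \<in> dirs"
  shows "\<exists>C. \<forall>h. \<bar>h\<bar> \<le> 1 \<longrightarrow> norm (ray_integral \<phi> w (t + h) - ray_integral \<phi> w t
           - h *\<^sub>R ray_integral ([:0, 1:] * \<phi>) w t) \<le> h\<^sup>2 * C"
proof -
  define rem where "rem h s = ray_integrand \<phi> w (t + h) s - ray_integrand \<phi> w t s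
      - of_real h * ray_integrand ([:0, 1:] * \<phi>) w t s" for h s
  obtain C where C: "\<And>h s. \<bar>h\<bar> \<le> 1 \<Longrightarrow> s \<ge> 0 \<Longrightarrow> norm (rem h s) \<le> h\<^sup>2 * C * exp (- s)"
    using norm_ray_integrand_remainder_le[OF w, of \<phi> t] unfolding rem_def by blast
  have "ray_integral \<phi> w (t + h) - ray_integral \<phi> w t - h *\<^sub>R ray_integral ([:0, 1:] * \<phi>) w t
      = integral {0..} (rem h)" for h
  proof -
    note integrable = ray_integrand_integrable[OF w]
    have "integral {0..} (rem h)
        = integral {0..} (\<lambda>s. ray_integrand \<phi> w (t + h) s - ray_integrand \<phi> w t s)
          - integral {0..} (\<lambda>s. of_real h * ray_integrand ([:0, 1:] * \<phi>) w t s)"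
      unfolding rem_def by (intro integral_diff integrable_diff integrable integrable_on_cmult_left)
    then show ?thesis
      by (simp add: ray_integral_eq_integral integral_diff integrable scaleR_conv_of_real)
  qed
  moreover have "norm (integral {0..} (rem h)) \<le> h\<^sup>2 * C" if "\<bar>h\<bar> \<le> 1" for h
    using norm_integral_exp_decay_le[of 0 "rem h" "h\<^sup>2 * C"] C[OF that]
    by (simp add: rem_def continuous_on_ray_integrand continuous_intros)
  ultimately show ?thesis
    by auto
qed

lemma ray_integral_has_vector_derivative:
  assumes w: "w \<in> dirs"
  shows "((\<lambda>t. ray_integral \<phi> w t) has_vector_derivative ray_integral ([:0, 1:] * \<phi>) w t) (at t)"
proof -
  define rem where "rem h = ray_integral \<phi> w (t + h) - ray_integral \<phi> w t
      - h *\<^sub>R ray_integral ([:0, 1:] * \<phi>) w t" for h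
  obtain C where C: "\<And>h. \<bar>h\<bar> \<le> 1 \<Longrightarrow> norm (rem h) \<le> h\<^sup>2 * C"
    using norm_ray_integral_remainder_le[OF w, of \<phi> t] unfolding rem_def by blast
  have "((\<lambda>h. norm (rem h) / norm h) \<longlongrightarrow> 0) (at 0)"
  proof (rule Lim_null_comparison)
    have "\<forall>\<^sub>F h in at (0::real). \<bar>h\<bar> < 1"
      using eventually_at[of "\<lambda>h. \<bar>h\<bar> < 1" 0 UNIV] by (auto intro: exI[of _ 1])
    then show "\<forall>\<^sub>F h in at 0. norm (norm (rem h) / norm h) \<le> \<bar>C\<bar> * \<bar>h\<bar>"
    proof eventually_elim
      case (elim h)
      have "norm (rem h) \<le> h\<^sup>2 * \<bar>C\<bar>"
        using C[of h] elim by (smt (verit) mult_left_mono zero_le_power2)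
      also have "\<dots> = \<bar>C\<bar> * \<bar>h\<bar> * \<bar>h\<bar>"
        by (simp add: power2_eq_square abs_mult_self_eq mult_ac)
      finally show ?case
        by (simp add: divide_le_eq abs_mult)
    qed
    show "((\<lambda>h. \<bar>C\<bar> * \<bar>h\<bar>) \<longlongrightarrow> 0) (at 0)"
      by (auto intro!: tendsto_eq_intros)
  qed
  then show ?thesis
    unfolding has_vector_derivative_def has_derivative_at rem_def
    by (simp add: bounded_linear_scaleR_left)
qed

section \<open>Derivatives of polynomial-valued functions and of quotients\<close>

definition has_coeff_derivative :: "(real \<Rightarrow> 'a::real_normed_field poly) \<Rightarrow> 'a poly \<Rightarrow> real \<Rightarrow> bool" where
  "has_coeff_derivative F F' t \<longleftrightarrow> (\<forall>k. ((\<lambda>s. coeff (F s) k) has_vector_derivative coeff F' k) (at t))"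

lemma has_coeff_derivative_const: "has_coeff_derivative (\<lambda>s. c) 0 t"
  unfolding has_coeff_derivative_def by (auto intro: derivative_eq_intros)

lemma has_coeff_derivative_diff:
  "has_coeff_derivative F F' t \<Longrightarrow> has_coeff_derivative G G' t \<Longrightarrow>
     has_coeff_derivative (\<lambda>s. F s - G s) (F' - G') t"
  unfolding has_coeff_derivative_def by (auto intro!: derivative_eq_intros)

lemma has_coeff_derivative_pCons:
  "(f has_vector_derivative f') (at t) \<Longrightarrow> has_coeff_derivative F F' t \<Longrightarrow>
     has_coeff_derivative (\<lambda>s. pCons (f s) (F s)) (pCons f' F') t"
  unfolding has_coeff_derivative_def by (auto simp: coeff_pCons split: nat.split)

lemma has_coeff_derivative_mult:
  assumes "has_coeff_derivative F F' t" "has_coeff_derivative G G' t"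
  shows "has_coeff_derivative (\<lambda>s. F s * G s) (F' * G t + F t * G') t"
  unfolding has_coeff_derivative_def
proof
  fix k
  have "((\<lambda>s. \<Sum>i\<le>k. coeff (F s) i * coeff (G s) (k - i)) has_vector_derivative
         (\<Sum>i\<le>k. coeff (F t) i * coeff G' (k - i) + coeff F' i * coeff (G t) (k - i))) (at t)"
    using assms unfolding has_coeff_derivative_def
    by (intro has_vector_derivative_sum has_vector_derivative_mult) auto
  then show "((\<lambda>s. coeff (F s * G s) k) has_vector_derivative coeff (F' * G t + F t * G') k) (at t)"
    by (simp only: coeff_add coeff_mult sum.distrib[symmetric] add.commute)
qed

lemma has_coeff_derivative_smult:
  assumes "(f has_vector_derivative f') (at t)" "has_coeff_derivative F F' t"
  shows "has_coeff_derivative (\<lambda>s. smult (f s) (F s)) (smult f' (F t) + smult (f t) F') t"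
  using has_coeff_derivative_mult[OF has_coeff_derivative_pCons[OF assms(1) has_coeff_derivative_const[of 0]] assms(2)]
  by simp

lemma has_coeff_derivative_transform_within_open:
  assumes "has_coeff_derivative F F' t" "open S" "t \<in> S" "\<And>s. s \<in> S \<Longrightarrow> F s = G s"
  shows "has_coeff_derivative G F' t"
  using assms unfolding has_coeff_derivative_def
  by (auto intro: has_vector_derivative_transform_within_open)

lemma has_coeff_derivative_coeff_eq_0:
  assumes "has_coeff_derivative F F' t" "open S" "t \<in> S" "\<And>s. s \<in> S \<Longrightarrow> coeff (F s) k = c"
  shows "coeff F' k = 0"
proof -
  have "((\<lambda>s. coeff (F s) k) has_vector_derivative 0) (at t)"
    by (rule has_vector_derivative_transform_within_open[OF _ assms(2,3)])
      (use assms(4) in \<open>auto intro: derivative_intros\<close>)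
  moreover have "((\<lambda>s. coeff (F s) k) has_vector_derivative coeff F' k) (at t)"
    using assms(1) by (simp add: has_coeff_derivative_def)
  ultimately show ?thesis
    using vector_derivative_unique_at by metis
qed

lemma has_coeff_derivative_degree_le:
  assumes "has_coeff_derivative F F' t" "open S" "t \<in> S" "\<And>s. s \<in> S \<Longrightarrow> degree (F s) \<le> N"
  shows "degree F' \<le> N"
proof (rule degree_le, intro allI impI)
  fix k assume "N < k"
  show "coeff F' k = 0"
    by (rule has_coeff_derivative_coeff_eq_0[OF assms(1-3)])
      (use assms(4) \<open>N < k\<close> in \<open>fastforce intro: coeff_eq_0\<close>)
qed

lemma has_vector_derivative_quotient:
  fixes f g :: "real \<Rightarrow> 'a::real_normed_field"
  assumes "(f has_vector_derivative f') (at t)" "(g has_vector_derivative g') (at t)" "g t \<noteq> 0"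
  shows "((\<lambda>s. f s / g s) has_vector_derivative (f' * g t - f t * g') / (g t)\<^sup>2) (at t)"
proof -
  have "((\<lambda>s. inverse (g s)) has_vector_derivative - g' / (g t)\<^sup>2) (at t)"
    using field_vector_diff_chain_at[OF assms(2) DERIV_inverse[OF assms(3)]]
    by (simp add: o_def power2_eq_square field_simps)
  from has_vector_derivative_mult[OF assms(1) this] show ?thesis
    using assms(3) by (simp add: divide_inverse[symmetric] power2_eq_square field_simps)
qed

lemma has_vector_derivative_iff_difference_quotient:
  fixes f :: "real \<Rightarrow> 'a::real_normed_field"
  shows "(f has_vector_derivative D) (at t) \<longleftrightarrow>
           ((\<lambda>y. (f y - f t) / of_real (y - t)) \<longlongrightarrow> D) (at t)"
proof -
  have "(f has_vector_derivative D) (at t) \<longleftrightarrow>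
      ((\<lambda>y. norm (f y - f t - (y - t) *\<^sub>R D) / norm (y - t)) \<longlongrightarrow> 0) (at t)"
    unfolding has_vector_derivative_def has_derivative_iff_norm
    by (simp add: bounded_linear_scaleR_left)
  also have "\<dots> \<longleftrightarrow> ((\<lambda>y. norm ((f y - f t) / of_real (y - t) - D)) \<longlongrightarrow> 0) (at t)"
  proof (rule tendsto_cong)
    show "\<forall>\<^sub>F y in at t. norm (f y - f t - (y - t) *\<^sub>R D) / norm (y - t)
        = norm ((f y - f t) / of_real (y - t) - D)"
      unfolding eventually_at_filter
    proof (intro always_eventually allI impI)
      fix y assume "y \<noteq> t"
      then have "(f y - f t) / of_real (y - t) - D = (f y - f t - (y - t) *\<^sub>R D) / of_real (y - t)"
        by (simp add: field_simps scaleR_conv_of_real)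
      then show "norm (f y - f t - (y - t) *\<^sub>R D) / norm (y - t) = norm ((f y - f t) / of_real (y - t) - D)"
        by (simp add: norm_divide del: of_real_diff)
    qed
  qed
  also have "\<dots> \<longleftrightarrow> ((\<lambda>y. (f y - f t) / of_real (y - t)) \<longlongrightarrow> D) (at t)"
    by (simp add: tendsto_norm_zero_iff LIM_zero_iff)
  finally show ?thesis .
qed

lemma has_vector_derivative_of_square:
  fixes f :: "real \<Rightarrow> 'a::real_normed_field"
  assumes cont: "isCont f t" and nonzero: "f t \<noteq> 0"
    and deriv: "((\<lambda>s. (f s)\<^sup>2) has_vector_derivative D) (at t)"
  shows "(f has_vector_derivative D / (2 * f t)) (at t)"
proof -
  have sum: "((\<lambda>y. f y + f t) \<longlongrightarrow> 2 * f t) (at t)"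
    using cont by (auto simp: isCont_def intro!: tendsto_eq_intros)
  moreover have "2 * f t \<noteq> 0"
    using nonzero by simp
  ultimately have "\<forall>\<^sub>F y in at t. f y + f t \<noteq> 0"
    by (rule tendsto_imp_eventually_ne)
  then have "\<forall>\<^sub>F y in at t. ((f y)\<^sup>2 - (f t)\<^sup>2) / of_real (y - t) / (f y + f t)
      = (f y - f t) / of_real (y - t)"
    by eventually_elim (simp add: power2_eq_square square_diff_square_factored)
  moreover have "((\<lambda>y. ((f y)\<^sup>2 - (f t)\<^sup>2) / of_real (y - t) / (f y + f t)) \<longlongrightarrow> D / (2 * f t)) (at t)"
    using deriv nonzero unfolding has_vector_derivative_iff_difference_quotient
    by (intro tendsto_divide sum) auto
  ultimately show ?thesis
    unfolding has_vector_derivative_iff_difference_quotient by (rule Lim_transform_eventually[rotated])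
qed

section \<open>The functional \<open>\<L>\<^sub>t\<close>\<close>

locale admissible_contours =
  fixes r :: nat and lam src tgt :: "nat \<Rightarrow> complex"
  assumes contours_in_dirs: "\<And>j. j < r \<Longrightarrow> src j \<in> dirs \<and> tgt j \<in> dirs"
begin

abbreviation L :: "real \<Rightarrow> complex poly \<Rightarrow> complex" where
  "L \<equiv> L_fun r lam src tgt"

lemma L_add: "L t (\<phi> + \<psi>) = L t \<phi> + L t \<psi>"
  using contours_in_dirs
  by (simp add: L_fun_def contour_functional_def ray_integral_add sum.distrib[symmetric] algebra_simps)

lemma L_smult: "L t (smult c \<phi>) = c * L t \<phi>"
  by (simp add: L_fun_def contour_functional_def ray_integral_smult sum_distrib_left algebra_simps)

lemma L_zero: "L t 0 = 0"
  using L_smult[of t 0 0] by simp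

lemma L_diff: "L t (\<phi> - \<psi>) = L t \<phi> - L t \<psi>"
  using L_add[of t \<phi> "- \<psi>"] L_smult[of t "- 1" \<psi>] by simp

lemma L_sum: "L t (\<Sum>k\<in>A. f k) = (\<Sum>k\<in>A. L t (f k))"
  by (induction A rule: infinite_finite_induct) (simp_all add: L_zero L_add)

lemmas L_linear = L_add L_diff L_smult L_zero

lemma L_by_parts: "L t (pderiv \<phi> + [:of_real t, 0, 1:] * \<phi>) = 0"
proof -
  have "contour_functional (src j) (tgt j) t (pderiv \<phi> + [:of_real t, 0, 1:] * \<phi>) = 0" if "j < r" for j
    using ray_integral_by_parts[where w = "src j" and \<phi> = \<phi> and t = t]
      ray_integral_by_parts[where w = "tgt j" and \<phi> = \<phi> and t = t] contours_in_dirs[OF that]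
    by (simp add: contour_functional_def)
  then show ?thesis
    by (simp add: L_fun_def)
qed

lemma L_has_vector_derivative: "((\<lambda>s. L s \<phi>) has_vector_derivative L t ([:0, 1:] * \<phi>)) (at t)"
  unfolding L_fun_def contour_functional_def using contours_in_dirs
  by (intro has_vector_derivative_sum has_vector_derivative_mult_right
      has_vector_derivative_diff ray_integral_has_vector_derivative) auto

lemma L_eq_sum_moments:
  assumes "degree \<phi> \<le> N"
  shows "L t (\<psi> * \<phi>) = (\<Sum>k\<le>N. coeff \<phi> k * L t (\<psi> * monom 1 k))"
proof -
  have "\<psi> * \<phi> = \<psi> * (\<Sum>k\<le>N. smult (coeff \<phi> k) (monom 1 k))"
    using poly_as_sum_of_monoms'[OF assms] by (simp add: smult_monom)
  then show ?thesis
    by (simp add: sum_distrib_left L_sum L_smult)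
qed

lemma L_family_has_vector_derivative:
  assumes F: "has_coeff_derivative F F' t" and S: "open S" "t \<in> S"
    and deg: "\<And>s. s \<in> S \<Longrightarrow> degree (F s) \<le> N"
  shows "((\<lambda>s. L s (F s)) has_vector_derivative L t F' + L t ([:0, 1:] * F t)) (at t)"
proof -
  have "((\<lambda>s. \<Sum>k\<le>N. coeff (F s) k * L s (monom 1 k)) has_vector_derivative
      (\<Sum>k\<le>N. coeff (F t) k * L t ([:0, 1:] * monom 1 k) + coeff F' k * L t (monom 1 k))) (at t)"
    using F unfolding has_coeff_derivative_def
    by (intro has_vector_derivative_sum has_vector_derivative_mult L_has_vector_derivative) auto
  moreover have "\<And>s. s \<in> S \<Longrightarrow> (\<Sum>k\<le>N. coeff (F s) k * L s (monom 1 k)) = L s (F s)"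
    using L_eq_sum_moments[OF deg, where \<psi> = 1] by simp
  ultimately have "((\<lambda>s. L s (F s)) has_vector_derivative
      (\<Sum>k\<le>N. coeff (F t) k * L t ([:0, 1:] * monom 1 k) + coeff F' k * L t (monom 1 k))) (at t)"
    by (rule has_vector_derivative_transform_within_open[OF _ S]) auto
  also have "(\<Sum>k\<le>N. coeff (F t) k * L t ([:0, 1:] * monom 1 k) + coeff F' k * L t (monom 1 k))
      = L t F' + L t ([:0, 1:] * F t)"
    using L_eq_sum_moments[OF deg[OF S(2)], where t = t and \<psi> = "[:0, 1:]"]
      L_eq_sum_moments[OF has_coeff_derivative_degree_le[OF F S deg], where t = t and \<psi> = 1]
    by (simp add: sum.distrib)
  finally show ?thesis .
qed

end

section \<open>Orthonormal polynomials for \<open>\<L>\<^sub>t\<close>\<close>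

lemma pCons_quadratic_mult:
  fixes q :: "'a::comm_ring_1 poly"
  shows "[:c, 0, 1:] * q = smult c q + [:0, 1:] * ([:0, 1:] * q)"
  by (simp add: mult_pCons_left)

locale orthonormal_polynomials = admissible_contours r lam src tgt
  for r :: nat and lam src tgt :: "nat \<Rightarrow> complex" +
  fixes I :: "real set" and p :: "nat \<Rightarrow> real \<Rightarrow> complex poly" and a b :: "nat \<Rightarrow> real \<Rightarrow> complex"
  assumes open_I: "open I"
    and degree_p: "\<And>t n. t \<in> I \<Longrightarrow> degree (p n t) = n \<and> p n t \<noteq> 0"
    and orthonormal: "\<And>t n m. t \<in> I \<Longrightarrow>
          L_fun r lam src tgt t (p n t * p m t) = (if n = m then 1 else 0)"
    and continuous_lead_coeff: "\<And>n. continuous_on I (\<lambda>s. lead_coeff (p n s))"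
    and a_def: "\<And>t n. t \<in> I \<Longrightarrow> n \<ge> 1 \<Longrightarrow> a n t = lead_coeff (p (n - 1) t) / lead_coeff (p n t)"
    and recurrence: "\<And>t n. t \<in> I \<Longrightarrow> smult (a (Suc n) t) (p (Suc n) t)
          = [:- b n t, 1:] * p n t - (if n = 0 then 0 else smult (a n t) (p (n - 1) t))"
begin

lemma lead_coeff_p_nonzero: "t \<in> I \<Longrightarrow> lead_coeff (p n t) \<noteq> 0"
  by (metis degree_p leading_coeff_0_iff)

lemma coeff_p_eq_0: "t \<in> I \<Longrightarrow> n < k \<Longrightarrow> coeff (p n t) k = 0"
  using degree_p by (simp add: coeff_eq_0)

lemma coeff_p_degree: "t \<in> I \<Longrightarrow> coeff (p n t) n = lead_coeff (p n t)"
  using degree_p by simp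

lemma coeff_pderiv_p_eq_0: "t \<in> I \<Longrightarrow> n \<le> k \<Longrightarrow> coeff (pderiv (p n t)) k = 0"
  by (simp add: coeff_pderiv coeff_p_eq_0)

lemma a_nonzero: "t \<in> I \<Longrightarrow> n \<ge> 1 \<Longrightarrow> a n t \<noteq> 0"
  using a_def lead_coeff_p_nonzero by simp

lemma orthogonal_lower_degree:
  assumes t: "t \<in> I" and low: "\<And>k. k \<ge> N \<Longrightarrow> coeff q k = 0"
  shows "L t (p N t * q) = 0"
proof -
  have "L t (p N t * q) = 0" if "d \<le> N" "\<forall>k\<ge>d. coeff q k = 0" for d q
    using that
  proof (induction d arbitrary: q)
    case 0
    then have "q = 0"
      by (simp add: poly_eq_iff)
    then show ?case
      by (simp add: L_zero)
  next
    case (Suc m)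
    define c where "c = coeff q m / lead_coeff (p m t)"
    have "\<forall>k\<ge>m. coeff (q - smult c (p m t)) k = 0"
    proof (intro allI impI)
      fix k assume "m \<le> k"
      then consider "k = m" | "m < k"
        by linarith
      then show "coeff (q - smult c (p m t)) k = 0"
        using Suc.prems lead_coeff_p_nonzero[OF t, of m] coeff_p_degree[OF t, of m] coeff_p_eq_0[OF t]
        by cases (auto simp: c_def Suc_le_eq)
    qed
    then have "L t (p N t * (q - smult c (p m t))) = 0"
      using Suc by simp
    moreover have "L t (p N t * p m t) = 0"
      using orthonormal[OF t] Suc.prems by simp
    ultimately show ?case
      by (simp add: right_diff_distrib L_linear)
  qed
  then show ?thesis
    using low by blast
qed

lemma X_mult_p: "t \<in> I \<Longrightarrow> [:0, 1:] * p n t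
    = smult (a (Suc n) t) (p (Suc n) t) + smult (b n t) (p n t)
      + (if n = 0 then 0 else smult (a n t) (p (n - 1) t))"
  using recurrence[of t n] by (simp add: mult_pCons_left algebra_simps)

lemma first_string_equation:
  assumes t: "t \<in> I" and n: "n \<ge> 1"
  shows "(a n t)\<^sup>2 + (a (Suc n) t)\<^sup>2 + (b n t)\<^sup>2 + of_real t = 0"
proof -
  obtain m where m: "n = Suc m"
    using n by (cases n) auto
  define q where "q = p n t"
  have parts: "pderiv (q * q) + [:of_real t, 0, 1:] * (q * q)
      = q * pderiv q + q * pderiv q + smult (of_real t) (q * q) + ([:0, 1:] * q) * ([:0, 1:] * q)"
    unfolding pCons_quadratic_mult by (simp add: pderiv_mult algebra_simps)
  have "L t (q * pderiv q) = 0"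
    unfolding q_def by (rule orthogonal_lower_degree[OF t coeff_pderiv_p_eq_0[OF t]])
  moreover have "L t (q * q) = 1"
    using orthonormal[OF t] by (simp add: q_def)
  moreover have "L t (([:0, 1:] * q) * ([:0, 1:] * q)) = (a (Suc n) t)\<^sup>2 + (b n t)\<^sup>2 + (a n t)\<^sup>2"
    unfolding q_def m X_mult_p[OF t]
    by (simp add: ring_distribs L_linear orthonormal[OF t] power2_eq_square)
  ultimately show ?thesis
    using L_by_parts[of t "q * q"] unfolding parts
    by (simp only: L_add L_smult) (simp add: algebra_simps)
qed

lemma L_p_mult_pderiv_p:
  assumes t: "t \<in> I" and n: "n \<ge> 1"
  shows "L t (p (n - 1) t * pderiv (p n t)) = of_nat n / a n t"
proof -
  define c where "c = of_nat n / a n t"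
  have "L t (p (n - 1) t * (pderiv (p n t) - smult c (p (n - 1) t))) = 0"
  proof (rule orthogonal_lower_degree[OF t])
    fix k assume "n - 1 \<le> k"
    then consider "k = n - 1" | "n \<le> k"
      by linarith
    then show "coeff (pderiv (p n t) - smult c (p (n - 1) t)) k = 0"
    proof cases
      case 1
      then show ?thesis
        using n a_def[OF t n] lead_coeff_p_nonzero[OF t] coeff_p_degree[OF t]
        by (simp add: c_def coeff_pderiv)
    next
      case 2
      then show ?thesis
        using n coeff_p_eq_0[OF t, of "n - 1" k] coeff_pderiv_p_eq_0[OF t] by simp
    qed
  qed
  then show ?thesis
    using orthonormal[OF t, of "n - 1" "n - 1"] by (simp add: right_diff_distrib L_linear c_def)
qed

lemma second_string_equation:
  assumes t: "t \<in> I" and n: "n \<ge> 1"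
  shows "of_nat n + (a n t)\<^sup>2 * (b n t + b (n - 1) t) = 0"
proof -
  obtain m where m: "n = Suc m"
    using n by (cases n) auto
  define q q\<^sub>0 where "q = p n t" and "q\<^sub>0 = p m t"
  have parts: "pderiv (q * q\<^sub>0) + [:of_real t, 0, 1:] * (q * q\<^sub>0)
      = q\<^sub>0 * pderiv q + q * pderiv q\<^sub>0 + smult (of_real t) (q * q\<^sub>0) + ([:0, 1:] * q) * ([:0, 1:] * q\<^sub>0)"
    unfolding pCons_quadratic_mult by (simp add: pderiv_mult algebra_simps)
  have "L t (q * pderiv q\<^sub>0) = 0"
    unfolding q_def q\<^sub>0_def m
    by (rule orthogonal_lower_degree[OF t]) (simp add: coeff_pderiv_p_eq_0[OF t])
  moreover have "L t (q\<^sub>0 * pderiv q) = of_nat n / a n t"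
    using L_p_mult_pderiv_p[OF t n] by (simp add: q_def q\<^sub>0_def m)
  moreover have "L t (q * q\<^sub>0) = 0"
    using orthonormal[OF t] by (simp add: q_def q\<^sub>0_def m)
  moreover have "L t (([:0, 1:] * q) * ([:0, 1:] * q\<^sub>0)) = a n t * (b n t + b m t)"
    unfolding q_def q\<^sub>0_def m X_mult_p[OF t]
    by (cases m) (simp_all add: ring_distribs L_linear orthonormal[OF t])
  ultimately have "of_nat n / a n t + a n t * (b n t + b m t) = 0"
    using L_by_parts[of t "q * q\<^sub>0"] unfolding parts
    by (simp only: L_add L_smult) simp
  then show ?thesis
    using a_nonzero[OF t n] by (simp add: m field_simps power2_eq_square)
qed

end

section \<open>Monic orthogonal polynomials and their time derivatives\<close>

context orthonormal_polynomials
begin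

definition P :: "nat \<Rightarrow> real \<Rightarrow> complex poly" where
  "P n s = smult (inverse (lead_coeff (p n s))) (p n s)"

definition h :: "nat \<Rightarrow> real \<Rightarrow> complex" where
  "h n s = L s (P n s * P n s)"

lemma coeff_P_degree: "s \<in> I \<Longrightarrow> coeff (P n s) n = 1"
  using lead_coeff_p_nonzero[of s n] coeff_p_degree[of s n] by (simp add: P_def)

lemma coeff_P_eq_0: "s \<in> I \<Longrightarrow> n < k \<Longrightarrow> coeff (P n s) k = 0"
  using coeff_p_eq_0[of s n k] by (simp add: P_def)

lemma degree_P: "s \<in> I \<Longrightarrow> degree (P n s) = n"
  using degree_p[of s n] lead_coeff_p_nonzero[of s n] by (simp add: P_def)

lemma P_0: "s \<in> I \<Longrightarrow> P 0 s = 1"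
  by (rule poly_eqI) (auto simp: coeff_P_degree coeff_P_eq_0 coeff_1 simp del: One_nat_def)

lemma orthogonal_P_lower_degree:
  "s \<in> I \<Longrightarrow> (\<And>k. k \<ge> N \<Longrightarrow> coeff q k = 0) \<Longrightarrow> L s (P N s * q) = 0"
  using orthogonal_lower_degree[of s N q] by (simp add: P_def L_smult)

lemma h_eq: "s \<in> I \<Longrightarrow> h n s = inverse ((lead_coeff (p n s))\<^sup>2)"
  using orthonormal[of s n n] by (simp add: h_def P_def L_smult power2_eq_square)

lemma h_nonzero: "s \<in> I \<Longrightarrow> h n s \<noteq> 0"
  using h_eq lead_coeff_p_nonzero by simp

lemma L_P_mult:
  assumes s: "s \<in> I" and q: "\<And>k. k > N \<Longrightarrow> coeff q k = 0"
  shows "L s (P N s * q) = coeff q N * h N s"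
proof -
  define q' where "q' = q - smult (coeff q N) (P N s)"
  have "L s (P N s * q') = 0"
  proof (rule orthogonal_P_lower_degree[OF s])
    fix k assume "N \<le> k"
    then consider "k = N" | "k > N"
      by linarith
    then show "coeff q' k = 0"
      by cases (auto simp: q'_def coeff_P_degree[OF s] coeff_P_eq_0[OF s] q)
  qed
  moreover have "P N s * q = P N s * q' + smult (coeff q N) (P N s * P N s)"
    by (simp add: q'_def algebra_simps)
  ultimately show ?thesis
    by (simp add: h_def L_linear)
qed

lemma b_eq: "s \<in> I \<Longrightarrow> b n s = L s ([:0, 1:] * (P n s * P n s)) / h n s"
proof -
  assume s: "s \<in> I"
  have "L s (([:0, 1:] * p n s) * p n s) = b n s"
    unfolding X_mult_p[OF s] by (cases n) (simp_all add: ring_distribs L_linear orthonormal[OF s])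
  moreover have "[:0, 1:] * (P n s * P n s)
      = smult (inverse ((lead_coeff (p n s))\<^sup>2)) (([:0, 1:] * p n s) * p n s)"
    by (simp add: P_def power2_eq_square)
  then have "L s ([:0, 1:] * (P n s * P n s))
      = inverse ((lead_coeff (p n s))\<^sup>2) * L s (([:0, 1:] * p n s) * p n s)"
    by (simp only: L_smult)
  ultimately show ?thesis
    using h_eq[OF s] h_nonzero[OF s] lead_coeff_p_nonzero[OF s] by simp
qed

lemma a_squared_eq: "s \<in> I \<Longrightarrow> (a (Suc m) s)\<^sup>2 = h (Suc m) s / h m s"
  using a_def[of s "Suc m"] lead_coeff_p_nonzero[of s m] lead_coeff_p_nonzero[of s "Suc m"]
  by (simp add: h_eq power_divide divide_inverse power_mult_distrib power_inverse mult.commute)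

lemma P_recurrence:
  assumes s: "s \<in> I"
  shows "P (Suc n) s = [:- b n s, 1:] * P n s - (if n = 0 then 0 else smult ((a n s)\<^sup>2) (P (n - 1) s))"
proof -
  define g where "g k = lead_coeff (p k s)" for k
  have g: "g k \<noteq> 0" for k
    using lead_coeff_p_nonzero[OF s] by (simp add: g_def)
  have p_eq: "p k s = smult (g k) (P k s)" for k
    using g by (simp add: g_def P_def)
  have "a (Suc n) s * g (Suc n) = g n"
    using a_def[OF s, of "Suc n"] g by (simp add: g_def)
  then have "smult (g n) (P (Suc n) s) = smult (a (Suc n) s) (p (Suc n) s)"
    by (simp add: p_eq)
  also have "\<dots> = [:- b n s, 1:] * p n s - (if n = 0 then 0 else smult (a n s) (p (n - 1) s))"
    using recurrence[OF s] .
  also have "\<dots> = smult (g n) ([:- b n s, 1:] * P n s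
      - (if n = 0 then 0 else smult ((a n s)\<^sup>2) (P (n - 1) s)))"
  proof (cases "n = 0")
    case False
    then have "a n s * g (n - 1) = g n * (a n s)\<^sup>2"
      using a_def[OF s, of n] g by (simp add: g_def power2_eq_square field_simps)
    then show ?thesis
      using False by (simp add: p_eq smult_diff_right)
  qed (simp add: p_eq)
  finally show ?thesis
    using g by (rule smult_cancel[rotated])
qed

lemma h_has_vector_derivative_from_P:
  assumes t: "t \<in> I" and P': "has_coeff_derivative (P n) P' t"
  shows "(h n has_vector_derivative L t (P' * P n t + P n t * P') + L t ([:0, 1:] * (P n t * P n t))) (at t)"
  unfolding h_def[abs_def]
proof (rule L_family_has_vector_derivative[OF has_coeff_derivative_mult[OF P' P'] open_I t])
  fix s assume "s \<in> I"
  then show "degree (P n s * P n s) \<le> n + n"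
    using degree_mult_le[of "P n s" "P n s"] degree_P by simp
qed

lemma b_differentiable:
  assumes t: "t \<in> I" and P': "has_coeff_derivative (P n) P' t"
  shows "\<exists>B. (b n has_vector_derivative B) (at t)"
proof -
  have "((\<lambda>s. L s ([:0, 1:] * (P n s * P n s))) has_vector_derivative
      L t (0 * (P n t * P n t) + [:0, 1:] * (P' * P n t + P n t * P'))
      + L t ([:0, 1:] * ([:0, 1:] * (P n t * P n t)))) (at t)"
  proof (rule L_family_has_vector_derivative[OF _ open_I t])
    show "has_coeff_derivative (\<lambda>s. [:0, 1:] * (P n s * P n s))
        (0 * (P n t * P n t) + [:0, 1:] * (P' * P n t + P n t * P')) t"
      by (intro has_coeff_derivative_mult has_coeff_derivative_const P')
    fix s assume "s \<in> I"
    then show "degree ([:0, 1:] * (P n s * P n s)) \<le> 1 + (n + n)"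
      using degree_mult_le[of "[:0, 1:]" "P n s * P n s"] degree_mult_le[of "P n s" "P n s"] degree_P
      by (simp add: degree_pCons_eq_if)
  qed
  from has_vector_derivative_quotient[OF this h_has_vector_derivative_from_P[OF t P'] h_nonzero[OF t]]
  obtain B where "((\<lambda>s. L s ([:0, 1:] * (P n s * P n s)) / h n s) has_vector_derivative B) (at t)"
    by blast
  then have "(b n has_vector_derivative B) (at t)"
    by (rule has_vector_derivative_transform_within_open[OF _ open_I t]) (simp add: b_eq)
  then show ?thesis ..
qed

lemma a_squared_differentiable:
  assumes t: "t \<in> I" and "has_coeff_derivative (P (Suc m)) P' t" "has_coeff_derivative (P m) Q' t"
  shows "\<exists>A. ((\<lambda>s. (a (Suc m) s)\<^sup>2) has_vector_derivative A) (at t)"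
proof -
  from has_vector_derivative_quotient[OF h_has_vector_derivative_from_P[OF t assms(2)]
      h_has_vector_derivative_from_P[OF t assms(3)] h_nonzero[OF t]]
  obtain A where "((\<lambda>s. h (Suc m) s / h m s) has_vector_derivative A) (at t)"
    by blast
  then have "((\<lambda>s. (a (Suc m) s)\<^sup>2) has_vector_derivative A) (at t)"
    by (rule has_vector_derivative_transform_within_open[OF _ open_I t]) (simp add: a_squared_eq)
  then show ?thesis ..
qed

lemma P_Suc_has_coeff_derivative:
  assumes t: "t \<in> I" and P': "has_coeff_derivative (P k) P' t"
    and P_pred: "k \<noteq> 0 \<Longrightarrow> \<exists>Q'. has_coeff_derivative (P (k - 1)) Q' t"
  shows "\<exists>R. has_coeff_derivative (P (Suc k)) R t"
proof -
  obtain B where "(b k has_vector_derivative B) (at t)"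
    using b_differentiable[OF t P'] by blast
  then have linear: "has_coeff_derivative (\<lambda>s. [:- b k s, 1:]) [:- B, 0:] t"
    by (intro has_coeff_derivative_pCons has_coeff_derivative_const derivative_intros)
  show ?thesis
  proof (cases k)
    case 0
    obtain R where "has_coeff_derivative (\<lambda>s. [:- b k s, 1:] * P k s) R t"
      using has_coeff_derivative_mult[OF linear P'] by blast
    then have "has_coeff_derivative (P (Suc k)) R t"
      by (rule has_coeff_derivative_transform_within_open[OF _ open_I t]) (simp add: 0 P_recurrence)
    then show ?thesis ..
  next
    case (Suc m)
    obtain Q' where Q': "has_coeff_derivative (P m) Q' t"
      using P_pred Suc by auto
    obtain A where A: "((\<lambda>s. (a k s)\<^sup>2) has_vector_derivative A) (at t)"
      using a_squared_differentiable[OF t _ Q'] P' Suc by blast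
    obtain R where "has_coeff_derivative (\<lambda>s. [:- b k s, 1:] * P k s - smult ((a k s)\<^sup>2) (P m s)) R t"
      using has_coeff_derivative_diff[OF has_coeff_derivative_mult[OF linear P']
          has_coeff_derivative_smult[OF A Q']] by blast
    then have "has_coeff_derivative (P (Suc k)) R t"
      by (rule has_coeff_derivative_transform_within_open[OF _ open_I t]) (simp add: Suc P_recurrence)
    then show ?thesis ..
  qed
qed

lemma P_has_coeff_derivative:
  assumes t: "t \<in> I"
  shows "\<exists>P'. has_coeff_derivative (P n) P' t"
proof (induction n rule: less_induct)
  case (less n)
  show ?case
  proof (cases n)
    case 0
    have "has_coeff_derivative (P 0) 0 t"
      by (rule has_coeff_derivative_transform_within_open[OF has_coeff_derivative_const open_I t])
        (simp add: P_0)
    then show ?thesis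
      using 0 by blast
  next
    case (Suc k)
    then obtain P' where "has_coeff_derivative (P k) P' t"
      using less[of k] by auto
    moreover have "k \<noteq> 0 \<Longrightarrow> \<exists>Q'. has_coeff_derivative (P (k - 1)) Q' t"
      using less[of "k - 1"] Suc by simp
    ultimately show ?thesis
      using P_Suc_has_coeff_derivative[OF t] Suc by blast
  qed
qed

lemma has_coeff_derivative_P_coeff_eq_0:
  assumes t: "t \<in> I" and P': "has_coeff_derivative (P n) P' t" and k: "n \<le> k"
  shows "coeff P' k = 0"
proof (cases "k = n")
  case True
  then show ?thesis
    by (intro has_coeff_derivative_coeff_eq_0[OF P' open_I t, of k 1]) (simp add: coeff_P_degree)
next
  case False
  then show ?thesis
    using k by (intro has_coeff_derivative_coeff_eq_0[OF P' open_I t, of k 0]) (simp add: coeff_P_eq_0)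
qed

lemma h_has_vector_derivative:
  assumes t: "t \<in> I"
  shows "(h n has_vector_derivative b n t * h n t) (at t)"
proof -
  obtain P' where P': "has_coeff_derivative (P n) P' t"
    using P_has_coeff_derivative[OF t] by blast
  have "L t (P n t * P') = 0"
    by (rule orthogonal_P_lower_degree[OF t has_coeff_derivative_P_coeff_eq_0[OF t P']])
  then have "L t (P' * P n t + P n t * P') = 0"
    by (simp only: L_add mult.commute[of P' "P n t"]) simp
  moreover have "L t ([:0, 1:] * (P n t * P n t)) = b n t * h n t"
    using b_eq[OF t, of n] h_nonzero[OF t, of n] by simp
  ultimately show ?thesis
    using h_has_vector_derivative_from_P[OF t P'] by simp
qed

lemma has_coeff_derivative_P_subleading:
  assumes t: "t \<in> I" and P': "has_coeff_derivative (P (Suc j)) P' t"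
  shows "coeff P' j = - (a (Suc j) t)\<^sup>2"
proof -
  obtain Q' where Q': "has_coeff_derivative (P j) Q' t"
    using P_has_coeff_derivative[OF t] by blast
  have deriv: "((\<lambda>s. L s (P (Suc j) s * P j s)) has_vector_derivative
      L t (P' * P j t + P (Suc j) t * Q') + L t ([:0, 1:] * (P (Suc j) t * P j t))) (at t)"
  proof (rule L_family_has_vector_derivative[OF has_coeff_derivative_mult[OF P' Q'] open_I t])
    fix s assume "s \<in> I"
    then show "degree (P (Suc j) s * P j s) \<le> Suc j + j"
      using degree_mult_le[of "P (Suc j) s" "P j s"] degree_P by simp
  qed
  have "((\<lambda>s. L s (P (Suc j) s * P j s)) has_vector_derivative 0) (at t)"
  proof (rule has_vector_derivative_transform_within_open[OF _ open_I t])
    show "((\<lambda>s. 0) has_vector_derivative 0) (at t)"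
      by (rule derivative_intros)
    fix s assume "s \<in> I"
    then show "0 = L s (P (Suc j) s * P j s)"
      by (intro orthogonal_P_lower_degree[symmetric]) (simp_all add: coeff_P_eq_0)
  qed
  then have zero: "L t (P' * P j t + P (Suc j) t * Q') + L t ([:0, 1:] * (P (Suc j) t * P j t)) = 0"
    using vector_derivative_unique_at[OF deriv] by blast
  have "L t (P j t * P') = coeff P' j * h j t"
    by (rule L_P_mult[OF t]) (simp add: has_coeff_derivative_P_coeff_eq_0[OF t P'])
  moreover have "L t (P (Suc j) t * Q') = 0"
    by (rule orthogonal_P_lower_degree[OF t]) (simp add: has_coeff_derivative_P_coeff_eq_0[OF t Q'])
  moreover have "L t (P (Suc j) t * ([:0, 1:] * P j t)) = h (Suc j) t"
    using L_P_mult[OF t, of "Suc j" "[:0, 1:] * P j t"] coeff_P_degree[OF t, of j] coeff_P_eq_0[OF t, of j]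
    by (simp add: coeff_pCons split: nat.split)
  ultimately have "coeff P' j * h j t + h (Suc j) t = 0"
    using zero by (simp add: L_add mult.commute mult.left_commute)
  then show ?thesis
    using h_nonzero[OF t, of j] by (simp add: a_squared_eq[OF t] field_simps eq_neg_iff_add_eq_0)
qed

lemma b_eq_coeff_diff:
  assumes s: "s \<in> I"
  shows "b (Suc j) s = coeff (P (Suc j) s) j - coeff (P (Suc (Suc j)) s) (Suc j)"
  using P_recurrence[OF s, of "Suc j"] coeff_P_degree[OF s, of "Suc j"] coeff_P_eq_0[OF s, of j "Suc j"]
  by simp

lemma isCont_a:
  assumes t: "t \<in> I"
  shows "isCont (a (Suc m)) t"
proof -
  have "continuous_on I (\<lambda>s. lead_coeff (p m s) / lead_coeff (p (Suc m) s))"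
    using lead_coeff_p_nonzero by (intro continuous_on_divide continuous_lead_coeff) auto
  then have ratio: "isCont (\<lambda>s. lead_coeff (p m s) / lead_coeff (p (Suc m) s)) t"
    using continuous_on_eq_continuous_at[OF open_I] t by blast
  have "\<forall>\<^sub>F s in nhds t. a (Suc m) s = lead_coeff (p m s) / lead_coeff (p (Suc m) s)"
    using eventually_nhds_in_open[OF open_I t] by eventually_elim (simp add: a_def)
  from isCont_cong[OF this] ratio show ?thesis
    by simp
qed

lemma a_has_vector_derivative:
  assumes t: "t \<in> I" and n: "n \<ge> 1"
  shows "(a n has_vector_derivative a n t * (b n t + of_nat n / (2 * (a n t)\<^sup>2))) (at t)"
proof -
  obtain m where m: "n = Suc m"
    using n by (cases n) auto
  have "((\<lambda>s. h n s / h m s) has_vector_derivative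
      (b n t * h n t * h m t - h n t * (b m t * h m t)) / (h m t)\<^sup>2) (at t)"
    by (rule has_vector_derivative_quotient[OF h_has_vector_derivative[OF t]
          h_has_vector_derivative[OF t] h_nonzero[OF t]])
  then have "((\<lambda>s. (a n s)\<^sup>2) has_vector_derivative
      (b n t * h n t * h m t - h n t * (b m t * h m t)) / (h m t)\<^sup>2) (at t)"
    by (rule has_vector_derivative_transform_within_open[OF _ open_I t]) (simp add: m a_squared_eq)
  also have "(b n t * h n t * h m t - h n t * (b m t * h m t)) / (h m t)\<^sup>2
      = (b n t - b m t) * (h n t / h m t)"
    using h_nonzero[OF t, of m] by (simp add: power2_eq_square field_simps)
  also have "\<dots> = (b n t - b m t) * (a n t)\<^sup>2"
    by (simp add: m a_squared_eq[OF t])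
  finally have "(a n has_vector_derivative (b n t - b m t) * (a n t)\<^sup>2 / (2 * a n t)) (at t)"
    using isCont_a[OF t, of m] a_nonzero[OF t n] by (intro has_vector_derivative_of_square) (simp_all add: m)
  also have "(b n t - b m t) * (a n t)\<^sup>2 / (2 * a n t) = a n t * (b n t + of_nat n / (2 * (a n t)\<^sup>2))"
  proof -
    have n_eq: "of_nat n = - ((a n t)\<^sup>2 * (b n t + b m t))"
      using second_string_equation[OF t n] by (simp add: m eq_neg_iff_add_eq_0)
    show ?thesis
      unfolding n_eq using a_nonzero[OF t n] by (simp add: field_simps power2_eq_square)
  qed
  finally show ?thesis .
qed

lemma b_has_vector_derivative:
  assumes t: "t \<in> I" and n: "n \<ge> 1"
  shows "(b n has_vector_derivative - (b n t)\<^sup>2 - 2 * (a n t)\<^sup>2 - of_real t) (at t)"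
proof -
  obtain m where m: "n = Suc m"
    using n by (cases n) auto
  obtain P' where P': "has_coeff_derivative (P n) P' t"
    using P_has_coeff_derivative[OF t] by blast
  obtain Q' where Q': "has_coeff_derivative (P (Suc n)) Q' t"
    using P_has_coeff_derivative[OF t] by blast
  have "((\<lambda>s. coeff (P n s) m - coeff (P (Suc n) s) n) has_vector_derivative coeff P' m - coeff Q' n) (at t)"
    using P' Q' unfolding has_coeff_derivative_def by (intro has_vector_derivative_diff) auto
  then have "(b n has_vector_derivative coeff P' m - coeff Q' n) (at t)"
    by (rule has_vector_derivative_transform_within_open[OF _ open_I t]) (simp add: m b_eq_coeff_diff)
  moreover have "coeff P' m - coeff Q' n = - (b n t)\<^sup>2 - 2 * (a n t)\<^sup>2 - of_real t"
  proof -
    have "coeff P' m = - (a n t)\<^sup>2"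
      using has_coeff_derivative_P_subleading[OF t P'[unfolded m]] by (simp add: m)
    moreover have "coeff Q' n = - (a (Suc n) t)\<^sup>2"
      using has_coeff_derivative_P_subleading[OF t Q'[unfolded m]] by (simp add: m)
    moreover have "(a (Suc n) t)\<^sup>2 = - (a n t)\<^sup>2 - (b n t)\<^sup>2 - of_real t"
      using first_string_equation[OF t n] by (simp add: eq_neg_iff_add_eq_0 algebra_simps)
    ultimately show ?thesis
      by simp
  qed
  ultimately show ?thesis
    by simp
qed

end

theorem mainTheorem10:
  fixes r :: nat and lam src tgt :: "nat \<Rightarrow> complex" and I :: "real set"
    and p :: "nat \<Rightarrow> real \<Rightarrow> complex poly" and a b :: "nat \<Rightarrow> real \<Rightarrow> complex"
  assumes dirs_ok: "\<And>j. j < r \<Longrightarrow> src j \<in> dirs \<and> tgt j \<in> dirs \<and> src j \<noteq> tgt j"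
    and I_open: "open I" and I_interval: "is_interval I" and I_ne: "I \<noteq> {}"
    and hankel: "\<And>t n. t \<in> I \<Longrightarrow> hankel_det (\<lambda>k. L_fun r lam src tgt t (monom 1 k)) n \<noteq> 0"
    and p_deg: "\<And>t n. t \<in> I \<Longrightarrow> degree (p n t) = n \<and> p n t \<noteq> 0"
    and p_orth: "\<And>t n m. t \<in> I \<Longrightarrow>
                   L_fun r lam src tgt t (p n t * p m t) = (if n = m then 1 else 0)"
    and p_cont: "\<And>n. continuous_on I (\<lambda>s. lead_coeff (p n s))"
    and a_def: "\<And>t n. t \<in> I \<Longrightarrow> n \<ge> 1 \<Longrightarrow>
                   a n t = lead_coeff (p (n - 1) t) / lead_coeff (p n t)"
    and recur: "\<And>t n. t \<in> I \<Longrightarrow>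
                   smult (a (Suc n) t) (p (Suc n) t)
                     = [:- b n t, 1:] * p n t - (if n = 0 then 0 else smult (a n t) (p (n - 1) t))"
  shows "\<forall>t\<in>I. \<forall>n\<ge>1.
           (a n t)\<^sup>2 + (a (Suc n) t)\<^sup>2 + (b n t)\<^sup>2 + of_real t = 0
         \<and> of_nat n + (a n t)\<^sup>2 * (b n t + b (n - 1) t) = 0
         \<and> ((\<lambda>s. a n s) has_vector_derivative
               (a n t * (b n t + of_nat n / (2 * (a n t)\<^sup>2)))) (at t)
         \<and> ((\<lambda>s. b n s) has_vector_derivative
               (- (b n t)\<^sup>2 - 2 * (a n t)\<^sup>2 - of_real t)) (at t)"
proof -
  interpret orthonormal_polynomials r lam src tgt I p a b
    using dirs_ok I_open p_deg p_orth p_cont a_def recur by unfold_locales blast+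
  show ?thesis
    using first_string_equation second_string_equation a_has_vector_derivative b_has_vector_derivative
    by blast
qed

end
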